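(* For each finite set $B$, the assignment $M\mapsto M^a=(a_M\circ v_M,\,v_M,\,f_M)$ is a bijection from the set of maps whose corner set is $B$ onto the set of $a$-maps acting on $B$.
   Context: A map is a triple $M=(C_M,v_M,f_M)$ where $C_M$ is a finite cubic graph and $v_M,f_M$ are disjoint perfect matchings whose union is a disjoint union of 4-cycles; $a_M$ is the third perfect matching; the vertices of $C_M$ are the corners, and a map is regarded as determined by its three perfect matchings. Each perfect matching is identified with the fixed-point-free involution of the corners sending $x$ to the other end of the matching edge at $x$. An $a$-map on a finite set $B$ is a triple $(R,\Theta,\Phi)$ of permutations of $B$ with: (am1) $\Theta\Phi=\Phi\Theta$ and $\Theta^2=\Phi^2=\mathrm{id}$; (am2) $x,\Theta x,\Phi x,\Theta\Phi x$ are pairwise distinct for all $x\in B$; (am3) $R\Theta=\Theta R^{-1}$; (am4) $R^n(x)\ne\Theta x$ for all integers $n$ and all $x\in B$. *)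

theory Defs
  imports "HOL-Combinatorics.Permutations"
begin

text \<open>A perfect matching of the corner set B, identified with the fixed-point-free
involution of B sending a corner to the other end of its matching edge.\<close>
definition fpf_involution :: "'a set \<Rightarrow> ('a \<Rightarrow> 'a) \<Rightarrow> bool" where
  "fpf_involution B g \<longleftrightarrow> g permutes B \<and> (\<forall>x\<in>B. g (g x) = x \<and> g x \<noteq> x)"

text \<open>Maps with corner set B, given by their three perfect matchings (v, f, a):
v and f are disjoint perfect matchings whose union is a disjoint union of 4-cycles,
and a is the third perfect matching of the cubic (multi)graph.\<close>
definition maps_on :: "'a set \<Rightarrow> (('a \<Rightarrow> 'a) \<times> ('a \<Rightarrow> 'a) \<times> ('a \<Rightarrow> 'a)) set" where
  "maps_on B = {(v, f, a). fpf_involution B v \<and> fpf_involution B f \<and> fpf_involution B a \<and>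
      (\<forall>x\<in>B. v (f x) = f (v x) \<and>
              x \<noteq> v x \<and> x \<noteq> f x \<and> x \<noteq> v (f x) \<and>
              v x \<noteq> f x \<and> v x \<noteq> v (f x) \<and> f x \<noteq> v (f x))}"

text \<open>a-maps on B: triples (R, Theta, Phi) of permutations of B with (am1)-(am4).
Integer powers R^n are expressed via nonnegative powers of R and of its inverse.\<close>
definition amaps_on :: "'a set \<Rightarrow> (('a \<Rightarrow> 'a) \<times> ('a \<Rightarrow> 'a) \<times> ('a \<Rightarrow> 'a)) set" where
  "amaps_on B = {(R, \<Theta>, \<Phi>). R permutes B \<and> \<Theta> permutes B \<and> \<Phi> permutes B \<and>
      \<Theta> \<circ> \<Phi> = \<Phi> \<circ> \<Theta> \<and> \<Theta> \<circ> \<Theta> = id \<and> \<Phi> \<circ> \<Phi> = id \<and>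
      (\<forall>x\<in>B. x \<noteq> \<Theta> x \<and> x \<noteq> \<Phi> x \<and> x \<noteq> \<Theta> (\<Phi> x) \<and>
              \<Theta> x \<noteq> \<Phi> x \<and> \<Theta> x \<noteq> \<Theta> (\<Phi> x) \<and> \<Phi> x \<noteq> \<Theta> (\<Phi> x)) \<and>
      R \<circ> \<Theta> = \<Theta> \<circ> inv R \<and>
      (\<forall>n::nat. \<forall>x\<in>B. (R ^^ n) x \<noteq> \<Theta> x \<and> (inv R ^^ n) x \<noteq> \<Theta> x)}"

end

theory Submission
  imports Defs
begin

text \<open>With \<open>R = a \<circ> v\<close> for two fixed-point-free involutions \<open>v\<close> and \<open>a\<close>, the reflection \<open>v\<close>
conjugates \<open>R\<^sup>k\<close> to \<open>R\<^sup>-\<^sup>k\<close>.  Hence \<open>R\<^sup>2\<^sup>k x = v x\<close> would make \<open>R\<^sup>k x\<close> a fixed point of \<open>v\<close>,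
and \<open>R\<^sup>2\<^sup>k\<^sup>+\<^sup>1 x = v x\<close> would make \<open>v (R\<^sup>k x)\<close> a fixed point of \<open>a\<close>; this is (am4).\<close>

lemma fpf_involution_iff:
  "fpf_involution B g \<longleftrightarrow> g permutes B \<and> g \<circ> g = id \<and> (\<forall>x\<in>B. g x \<noteq> x)"
proof
  assume g: "fpf_involution B g"
  then have perm: "g permutes B"
    unfolding fpf_involution_def by blast
  have "g (g x) = x" for x
    using g permutes_not_in[OF perm, of x] unfolding fpf_involution_def
    by (cases "x \<in> B") auto
  then show "g permutes B \<and> g \<circ> g = id \<and> (\<forall>x\<in>B. g x \<noteq> x)"
    using g perm unfolding fpf_involution_def by auto
next
  assume "g permutes B \<and> g \<circ> g = id \<and> (\<forall>x\<in>B. g x \<noteq> x)"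
  then show "fpf_involution B g"
    unfolding fpf_involution_def by (auto dest: pointfree_idE)
qed

lemma funpow_comp_involutions_reflect:
  assumes v: "v \<circ> v = id" and a: "a \<circ> a = id"
  shows "((a \<circ> v) ^^ k) (v (((a \<circ> v) ^^ k) y)) = v y"
proof (induction k arbitrary: y)
  case 0
  then show ?case by simp
next
  case (Suc k)
  let ?R = "a \<circ> v"
  have "(?R ^^ Suc k) (v ((?R ^^ Suc k) y)) = ?R ((?R ^^ k) (v ((?R ^^ Suc k) y)))"
    by simp
  also have "\<dots> = ?R ((?R ^^ k) (v ((?R ^^ k) (?R y))))"
    by (simp only: funpow_Suc_right comp_apply)
  also have "\<dots> = ?R (v (?R y))"
    by (simp only: Suc.IH)
  also have "\<dots> = v y"
    using pointfree_idE[OF v] pointfree_idE[OF a] by simp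
  finally show ?case .
qed

lemma inv_comp_involutions:
  assumes "v \<circ> v = id" and "a \<circ> a = id"
  shows "inv (a \<circ> v) = v \<circ> a"
  by (rule inv_unique_comp)
    (simp_all add: fun_eq_iff pointfree_idE[OF assms(1)] pointfree_idE[OF assms(2)])

lemma inv_comp_involutions_funpow:
  assumes v: "v \<circ> v = id" and a: "a \<circ> a = id"
  shows "inv (a \<circ> v) ^^ n = v \<circ> (a \<circ> v) ^^ n \<circ> v"
proof (induction n)
  case 0
  then show ?case using v by simp
next
  case (Suc n)
  show ?case
    unfolding funpow.simps(2) Suc.IH by (simp only: inv_comp_involutions[OF v a] comp_assoc)
qed

lemma funpow_comp_fpf_involutions_neq:
  assumes v: "fpf_involution B v" and a: "fpf_involution B a" and x: "x \<in> B"
  shows "((a \<circ> v) ^^ n) x \<noteq> v x"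
proof
  assume eq: "((a \<circ> v) ^^ n) x = v x"
  let ?R = "a \<circ> v"
  have vv: "v \<circ> v = id" and aa: "a \<circ> a = id" and R_perm: "?R permutes B"
    using v a permutes_compose by (auto simp: fpf_involution_iff)
  note reflect = funpow_comp_involutions_reflect[OF vv aa]
  have "\<exists>k. n = k + k \<or> n = k + Suc k"
    by presburger
  then obtain k where "n = k + k \<or> n = k + Suc k" ..
  define y where "y = (?R ^^ k) x"
  have "y \<in> B"
    using permutes_in_funpow_image[OF R_perm x] by (simp add: y_def)
  from \<open>n = k + k \<or> n = k + Suc k\<close> show False
  proof
    assume "n = k + k"
    then have "(?R ^^ k) y = v x"
      using eq by (simp add: y_def funpow_add)
    then have "v y = y"
      using reflect[of k y] by (simp add: y_def pointfree_idE[OF vv])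
    then show False
      using v \<open>y \<in> B\<close> by (simp add: fpf_involution_iff)
  next
    assume "n = k + Suc k"
    then have "(?R ^^ k) (?R y) = v x"
      using eq unfolding y_def by (simp only: funpow_add funpow.simps(2) comp_apply)
    then have "y = v (a (v y))"
      using reflect[of k "?R y"] by (simp add: y_def pointfree_idE[OF vv])
    then have "a (v y) = v y"
      by (metis pointfree_idE[OF vv])
    then show False
      using v a \<open>y \<in> B\<close> by (simp add: fpf_involution_iff permutes_in_image)
  qed
qed

lemma maps_on_imp_amaps_on:
  assumes "(v, f, a) \<in> maps_on B"
  shows "(a \<circ> v, v, f) \<in> amaps_on B"
proof -
  have v: "fpf_involution B v" and f: "fpf_involution B f" and a: "fpf_involution B a"
    and commute: "\<forall>x\<in>B. v (f x) = f (v x)"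
    and distinct: "\<forall>x\<in>B. x \<noteq> v x \<and> x \<noteq> f x \<and> x \<noteq> v (f x) \<and>
                     v x \<noteq> f x \<and> v x \<noteq> v (f x) \<and> f x \<noteq> v (f x)"
    using assms unfolding maps_on_def by auto
  have pv: "v permutes B" and pf: "f permutes B" and pa: "a permutes B"
    and vv: "v \<circ> v = id" and ff: "f \<circ> f = id" and aa: "a \<circ> a = id"
    using v f a by (simp_all add: fpf_involution_iff)
  have "v (f x) = f (v x)" for x
    using commute permutes_not_in[OF pv] permutes_not_in[OF pf] by (cases "x \<in> B") auto
  then have am1: "v \<circ> f = f \<circ> v"
    by (simp add: fun_eq_iff)
  have am3: "(a \<circ> v) \<circ> v = v \<circ> inv (a \<circ> v)"
    by (simp add: inv_comp_involutions[OF vv aa] fun_eq_iff pointfree_idE[OF vv])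
  have "(inv (a \<circ> v) ^^ n) x \<noteq> v x" if "x \<in> B" for n x
  proof -
    have "((a \<circ> v) ^^ n) (v x) \<noteq> v (v x)"
      using funpow_comp_fpf_involutions_neq[OF v a] permutes_in_image[OF pv] that by simp
    then show ?thesis
      unfolding inv_comp_involutions_funpow[OF vv aa] by (metis comp_apply pointfree_idE[OF vv])
  qed
  then have am4: "\<forall>n. \<forall>x\<in>B. ((a \<circ> v) ^^ n) x \<noteq> v x \<and> (inv (a \<circ> v) ^^ n) x \<noteq> v x"
    using funpow_comp_fpf_involutions_neq[OF v a] by blast
  show ?thesis
    unfolding amaps_on_def mem_Collect_eq prod.case
    using permutes_compose[OF pv pa] pv pf am1 vv ff distinct am3 am4 by (intro conjI)
qed

lemma amaps_on_imp_maps_on: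
  assumes "(R, \<Theta>, \<Phi>) \<in> amaps_on B"
  shows "(\<Theta>, \<Phi>, R \<circ> \<Theta>) \<in> maps_on B"
proof -
  have pR: "R permutes B" and p\<Theta>: "\<Theta> permutes B" and p\<Phi>: "\<Phi> permutes B"
    and am1: "\<Theta> \<circ> \<Phi> = \<Phi> \<circ> \<Theta>" "\<Theta> \<circ> \<Theta> = id" "\<Phi> \<circ> \<Phi> = id"
    and distinct: "\<forall>x\<in>B. x \<noteq> \<Theta> x \<and> x \<noteq> \<Phi> x \<and> x \<noteq> \<Theta> (\<Phi> x) \<and>
                     \<Theta> x \<noteq> \<Phi> x \<and> \<Theta> x \<noteq> \<Theta> (\<Phi> x) \<and> \<Phi> x \<noteq> \<Theta> (\<Phi> x)"
    and am3: "R \<circ> \<Theta> = \<Theta> \<circ> inv R"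
    and am4: "\<forall>n. \<forall>x\<in>B. (R ^^ n) x \<noteq> \<Theta> x \<and> (inv R ^^ n) x \<noteq> \<Theta> x"
    using assms unfolding amaps_on_def by auto
  have "(R \<circ> \<Theta>) \<circ> (R \<circ> \<Theta>) = \<Theta> \<circ> (inv R \<circ> R) \<circ> \<Theta>"
    by (simp add: am3 comp_assoc)
  also have "\<dots> = id"
    by (simp add: permutes_inv_o(2)[OF pR] am1(2))
  finally have a_involution: "(R \<circ> \<Theta>) \<circ> (R \<circ> \<Theta>) = id" .
  have "R (\<Theta> x) \<noteq> x" if "x \<in> B" for x
  proof -
    have "(R ^^ 1) (\<Theta> x) \<noteq> \<Theta> (\<Theta> x)"
      using am4 permutes_in_image[OF p\<Theta>, of x] that by blast
    then show ?thesis
      by (simp add: pointfree_idE[OF am1(2)])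
  qed
  then have a_fpf: "fpf_involution B (R \<circ> \<Theta>)"
    using permutes_compose[OF p\<Theta> pR] a_involution by (simp add: fpf_involution_iff)
  have "fpf_involution B \<Theta>" "fpf_involution B \<Phi>"
    using p\<Theta> p\<Phi> am1 distinct by (auto simp: fpf_involution_iff)
  moreover have "\<forall>x\<in>B. \<Theta> (\<Phi> x) = \<Phi> (\<Theta> x)"
    using am1(1) by (metis comp_apply)
  ultimately show ?thesis
    unfolding maps_on_def mem_Collect_eq prod.case using a_fpf distinct by blast
qed

theorem proposition1p1:
  fixes B :: "'a set"
  assumes "finite B"
  shows "bij_betw (\<lambda>(v, f, a). (a \<circ> v, v, f)) (maps_on B) (amaps_on B)"
proof (rule bij_betw_byWitness[where f' = "\<lambda>(R, \<Theta>, \<Phi>). (\<Theta>, \<Phi>, R \<circ> \<Theta>)"])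
  have "(a \<circ> v) \<circ> v = a" if "(v, f, a) \<in> maps_on B" for v f a
    using that by (simp add: maps_on_def fpf_involution_iff comp_assoc)
  then show "\<forall>m\<in>maps_on B. (\<lambda>(R, \<Theta>, \<Phi>). (\<Theta>, \<Phi>, R \<circ> \<Theta>)) ((\<lambda>(v, f, a). (a \<circ> v, v, f)) m) = m"
    by auto
  have "(R \<circ> \<Theta>) \<circ> \<Theta> = R" if "(R, \<Theta>, \<Phi>) \<in> amaps_on B" for R \<Theta> \<Phi>
  proof -
    have "\<Theta> \<circ> \<Theta> = id"
      using that unfolding amaps_on_def by blast
    then show ?thesis
      by (simp add: comp_assoc)
  qed
  then show "\<forall>m\<in>amaps_on B. (\<lambda>(v, f, a). (a \<circ> v, v, f)) ((\<lambda>(R, \<Theta>, \<Phi>). (\<Theta>, \<Phi>, R \<circ> \<Theta>)) m) = m"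
    by auto
  show "(\<lambda>(v, f, a). (a \<circ> v, v, f)) ` maps_on B \<subseteq> amaps_on B"
    using maps_on_imp_amaps_on by auto
  show "(\<lambda>(R, \<Theta>, \<Phi>). (\<Theta>, \<Phi>, R \<circ> \<Theta>)) ` amaps_on B \<subseteq> maps_on B"
    using amaps_on_imp_maps_on by auto
qed

end
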